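(* Let $k\ge1$, $d>0$, and let $\gamma_1>0$, $\gamma_2,\ldots,\gamma_k\ge 0$. Let $x_1,\ldots,x_k$ be i.i.d. real standard Gaussian random variables, put $a_i=\sqrt{\gamma_i}$, $\gamma_{[l]}=\sum_{i=1}^l\gamma_i$ and $v_{[l]}=\frac{1}{\sqrt{\gamma_{[l]}}}\sum_{i=1}^l a_i x_i$ for $l=1,\ldots,k$. Define $P_k(d)=\Pr\{\tfrac12\sqrt{\gamma_{[k]}}\,d<v_{[k]}\}$ and $P_{1:k}(d)=\Pr\{\tfrac12\sqrt{\gamma_{[l]}}\,d<v_{[l]}\ \text{for all } l=1,\ldots,k\}$. Then $$\frac{1}{2^{k-1}}P_k(d)\le P_{1:k}(d)\le P_k(d).$$
   Context: Here $P_k(d)$ is the pairwise error probability after $k$ rounds of Chase-combining HARQ for two codewords at Euclidean distance $d$, and $P_{1:k}(d)$ the probability that the same pairwise error occurs in all rounds $1,\ldots,k$; $\gamma_l$ is the SNR of round $l$ and $v_{[l]}$ is the (unit-variance Gaussian) projected effective noise after maximum-ratio combining of the first $l$ rounds. *)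

theory Defs
  imports "HOL-Probability.Probability"
begin

definition gamma_acc :: "(nat \<Rightarrow> real) \<Rightarrow> nat \<Rightarrow> real" where
  "gamma_acc \<gamma> l = (\<Sum>i=1..l. \<gamma> i)"

definition v_noise :: "(nat \<Rightarrow> real) \<Rightarrow> (nat \<Rightarrow> 'a \<Rightarrow> real) \<Rightarrow> nat \<Rightarrow> 'a \<Rightarrow> real" where
  "v_noise \<gamma> X l \<omega> = (1 / sqrt (gamma_acc \<gamma> l)) * (\<Sum>i=1..l. sqrt (\<gamma> i) * X i \<omega>)"

definition P_k :: "'a measure \<Rightarrow> (nat \<Rightarrow> real) \<Rightarrow> (nat \<Rightarrow> 'a \<Rightarrow> real) \<Rightarrow> nat \<Rightarrow> real \<Rightarrow> real" where
  "P_k M \<gamma> X k d = measure M {\<omega> \<in> space M. 1/2 * sqrt (gamma_acc \<gamma> k) * d < v_noise \<gamma> X k \<omega>}"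

definition P_1k :: "'a measure \<Rightarrow> (nat \<Rightarrow> real) \<Rightarrow> (nat \<Rightarrow> 'a \<Rightarrow> real) \<Rightarrow> nat \<Rightarrow> real \<Rightarrow> real" where
  "P_1k M \<gamma> X k d = measure M {\<omega> \<in> space M. \<forall>l\<in>{1..k}. 1/2 * sqrt (gamma_acc \<gamma> l) * d < v_noise \<gamma> X l \<omega>}"

end

theory Submission
  imports Defs
begin

text \<open>Write v[j+1] = p * v[j] + q * x(j+1) with p^2 + q^2 = 1. The pair (v[j], x(j+1)) is a
standard Gaussian vector in the plane, independent of x(j+2), ..., x(k), and every later v[l] is a
function of v[j+1] and these. Reflecting the pair across the line R(p, q) preserves its law and
v[j+1] while swapping the half-planes p * x(j+1) <= q * v[j] and p * x(j+1) >= q * v[j]. Hence at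
least half of the probability of an error in all rounds j+1, ..., k sits in the first half-plane,
where v[j] >= p * v[j+1] > p * sqrt(gamma[j+1]) * d / 2 = sqrt(gamma[j]) * d / 2, i.e. the error
occurs in round j as well. Going down from j = k - 1 to 1 gives the factor 2^(k-1); the upper
bound is monotonicity of probability.\<close>

lemma nn_integral_lborel_pair_affine_fst:
  fixes f :: "real \<times> real \<Rightarrow> ennreal"
  assumes [measurable]: "f \<in> borel_measurable (lborel \<Otimes>\<^sub>M lborel)" and c: "\<bar>c\<bar> = 1"
  shows "(\<integral>\<^sup>+z. f (c * fst z + t * snd z, snd z) \<partial>(lborel \<Otimes>\<^sub>M lborel))
       = (\<integral>\<^sup>+z. f z \<partial>(lborel \<Otimes>\<^sub>M lborel))"
proof -
  have "(\<integral>\<^sup>+z. f z \<partial>(lborel \<Otimes>\<^sub>M lborel)) = (\<integral>\<^sup>+y. \<integral>\<^sup>+x. f (x, y) \<partial>lborel \<partial>lborel)"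
    by (rule lborel_pair.nn_integral_snd[symmetric]) simp
  also have "\<dots> = (\<integral>\<^sup>+y. \<integral>\<^sup>+x. f (c * x + t * y, y) \<partial>lborel \<partial>lborel)"
  proof (rule nn_integral_cong)
    fix y :: real
    show "(\<integral>\<^sup>+x. f (x, y) \<partial>lborel) = (\<integral>\<^sup>+x. f (c * x + t * y, y) \<partial>lborel)"
      using c nn_integral_real_affine[of "\<lambda>x. f (x, y)" c "t * y"] by (auto simp: add.commute)
  qed
  also have "\<dots> = (\<integral>\<^sup>+z. f (c * fst z + t * snd z, snd z) \<partial>(lborel \<Otimes>\<^sub>M lborel))"
    by (rule lborel_pair.nn_integral_snd[of "\<lambda>z. f (c * fst z + t * snd z, snd z)", simplified])
  finally show ?thesis ..
qed

lemma nn_integral_lborel_pair_affine_snd: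
  fixes f :: "real \<times> real \<Rightarrow> ennreal"
  assumes [measurable]: "f \<in> borel_measurable (lborel \<Otimes>\<^sub>M lborel)" and c: "\<bar>c\<bar> = 1"
  shows "(\<integral>\<^sup>+z. f (fst z, c * snd z + t * fst z) \<partial>(lborel \<Otimes>\<^sub>M lborel))
       = (\<integral>\<^sup>+z. f z \<partial>(lborel \<Otimes>\<^sub>M lborel))"
proof -
  have "(\<integral>\<^sup>+z. f z \<partial>(lborel \<Otimes>\<^sub>M lborel)) = (\<integral>\<^sup>+x. \<integral>\<^sup>+y. f (x, y) \<partial>lborel \<partial>lborel)"
    by (rule lborel.nn_integral_fst[symmetric]) simp
  also have "\<dots> = (\<integral>\<^sup>+x. \<integral>\<^sup>+y. f (x, c * y + t * x) \<partial>lborel \<partial>lborel)"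
  proof (rule nn_integral_cong)
    fix x :: real
    show "(\<integral>\<^sup>+y. f (x, y) \<partial>lborel) = (\<integral>\<^sup>+y. f (x, c * y + t * x) \<partial>lborel)"
      using c nn_integral_real_affine[of "\<lambda>y. f (x, y)" c "t * x"] by (auto simp: add.commute)
  qed
  also have "\<dots> = (\<integral>\<^sup>+z. f (fst z, c * snd z + t * fst z) \<partial>(lborel \<Otimes>\<^sub>M lborel))"
    by (rule lborel.nn_integral_fst[of "\<lambda>z. f (fst z, c * snd z + t * fst z)", simplified]) simp
  finally show ?thesis ..
qed

text \<open>For \<open>p\<^sup>2 + q\<^sup>2 = 1\<close> this is the reflection of the plane across the line \<open>\<real>(p, q)\<close>.\<close>
definition line_reflection :: "real \<Rightarrow> real \<Rightarrow> real \<times> real \<Rightarrow> real \<times> real" where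
  "line_reflection p q z =
     ((p\<^sup>2 - q\<^sup>2) * fst z + 2 * p * q * snd z, 2 * p * q * fst z + (q\<^sup>2 - p\<^sup>2) * snd z)"

lemma line_reflection_measurable [measurable]:
  "line_reflection p q \<in> measurable (lborel \<Otimes>\<^sub>M lborel) (lborel \<Otimes>\<^sub>M lborel)"
  unfolding line_reflection_def by measurable

lemma line_reflection_norm:
  "p\<^sup>2 + q\<^sup>2 = 1 \<Longrightarrow> (fst (line_reflection p q z))\<^sup>2 + (snd (line_reflection p q z))\<^sup>2 = (fst z)\<^sup>2 + (snd z)\<^sup>2"
  unfolding line_reflection_def by (simp add: power2_eq_square) algebra

lemma line_reflection_coordinates:
  assumes "p\<^sup>2 + q\<^sup>2 = 1"
  shows "p * fst (line_reflection p q z) + q * snd (line_reflection p q z) = p * fst z + q * snd z"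
    and "q * fst (line_reflection p q z) - p * snd (line_reflection p q z) = - (q * fst z - p * snd z)"
  using assms unfolding line_reflection_def by (simp_all add: power2_eq_square) algebra+

lemma nn_integral_lborel_pair_line_reflection:
  fixes f :: "real \<times> real \<Rightarrow> ennreal"
  assumes [measurable]: "f \<in> borel_measurable (lborel \<Otimes>\<^sub>M lborel)"
    and p: "p \<noteq> 0" and pq: "p\<^sup>2 + q\<^sup>2 = 1"
  shows "(\<integral>\<^sup>+z. f (line_reflection p q z) \<partial>(lborel \<Otimes>\<^sub>M lborel)) = (\<integral>\<^sup>+z. f z \<partial>(lborel \<Otimes>\<^sub>M lborel))"
proof -
  \<comment> \<open>The reflection is a shear, followed by a reflected shear, followed by a shear.\<close>
  define shear where "shear t z = (fst z + t * snd z, snd z)" for t :: real and z :: "real \<times> real"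
  define flip where "flip z = (fst z, - snd z + 2 * p * q * fst z)" for z :: "real \<times> real"
  have [measurable]: "shear t \<in> measurable (lborel \<Otimes>\<^sub>M lborel) (lborel \<Otimes>\<^sub>M lborel)"
    "flip \<in> measurable (lborel \<Otimes>\<^sub>M lborel) (lborel \<Otimes>\<^sub>M lborel)" for t
    unfolding shear_def flip_def by measurable
  have "line_reflection p q z = shear (- q / p) (flip (shear (q / p) z))" for z
    using p pq unfolding line_reflection_def shear_def flip_def prod_eq_iff
    by (simp add: field_simps power2_eq_square) algebra
  then have "(\<integral>\<^sup>+z. f (line_reflection p q z) \<partial>(lborel \<Otimes>\<^sub>M lborel))
      = (\<integral>\<^sup>+z. (\<lambda>w. f (shear (- q / p) (flip w))) (1 * fst z + q / p * snd z, snd z) \<partial>(lborel \<Otimes>\<^sub>M lborel))"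
    by (simp add: shear_def)
  also have "\<dots> = (\<integral>\<^sup>+z. (\<lambda>w. f (shear (- q / p) w)) (fst z, - 1 * snd z + 2 * p * q * fst z) \<partial>(lborel \<Otimes>\<^sub>M lborel))"
    by (subst nn_integral_lborel_pair_affine_fst) (simp_all add: flip_def)
  also have "\<dots> = (\<integral>\<^sup>+z. f (1 * fst z + - q / p * snd z, snd z) \<partial>(lborel \<Otimes>\<^sub>M lborel))"
    by (subst nn_integral_lborel_pair_affine_snd) (simp_all add: shear_def)
  also have "\<dots> = (\<integral>\<^sup>+z. f z \<partial>(lborel \<Otimes>\<^sub>M lborel))"
    by (rule nn_integral_lborel_pair_affine_fst) simp_all
  finally show ?thesis .
qed

abbreviation std_normal :: "real measure" where
  "std_normal \<equiv> density lborel (\<lambda>x. ennreal (std_normal_density x))"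

lemma prob_space_std_normal: "prob_space std_normal"
  using prob_space_normal_density[of 1 0] by simp

lemma std_normal_pair_eq_density:
  "std_normal \<Otimes>\<^sub>M std_normal = density (lborel \<Otimes>\<^sub>M lborel)
     (\<lambda>z. ennreal (std_normal_density (fst z) * std_normal_density (snd z)))"
proof -
  have "sigma_finite_measure std_normal"
    using prob_space_std_normal prob_space_imp_sigma_finite by blast
  then have "std_normal \<Otimes>\<^sub>M std_normal = density (lborel \<Otimes>\<^sub>M lborel)
      (\<lambda>(x, y). ennreal (std_normal_density x) * ennreal (std_normal_density y))"
    by (intro pair_measure_density) (simp_all add: lborel.sigma_finite_measure_axioms)
  also have "\<dots> = density (lborel \<Otimes>\<^sub>M lborel)
      (\<lambda>z. ennreal (std_normal_density (fst z) * std_normal_density (snd z)))"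
    by (rule density_cong) (auto simp: ennreal_mult)
  finally show ?thesis .
qed

lemma std_normal_density_mult:
  "std_normal_density x * std_normal_density y = exp (- (x\<^sup>2 + y\<^sup>2) / 2) / (2 * pi)"
  by (simp add: std_normal_density_def exp_add[symmetric] field_simps real_sqrt_mult[symmetric])

lemma distr_std_normal_pair_line_reflection:
  assumes p: "p \<noteq> 0" and pq: "p\<^sup>2 + q\<^sup>2 = 1"
  shows "distr (std_normal \<Otimes>\<^sub>M std_normal) (lborel \<Otimes>\<^sub>M lborel) (line_reflection p q)
       = std_normal \<Otimes>\<^sub>M std_normal"
proof -
  let ?L2 = "lborel \<Otimes>\<^sub>M lborel :: (real \<times> real) measure"
  define g where "g z = ennreal (std_normal_density (fst z) * std_normal_density (snd z))" for z
  have [measurable]: "g \<in> borel_measurable ?L2"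
    unfolding g_def by measurable
  have g_reflection: "g (line_reflection p q z) = g z" for z
    unfolding g_def std_normal_density_mult line_reflection_norm[OF pq] ..
  show ?thesis unfolding std_normal_pair_eq_density g_def[symmetric]
  proof (rule measure_eqI)
    fix A assume "A \<in> sets (distr (density ?L2 g) ?L2 (line_reflection p q))"
    then have A [measurable]: "A \<in> sets ?L2" by simp
    have "emeasure (distr (density ?L2 g) ?L2 (line_reflection p q)) A
        = emeasure (density ?L2 g) (line_reflection p q -` A \<inter> space ?L2)"
      using A by (subst emeasure_distr) simp_all
    also have "\<dots> = (\<integral>\<^sup>+z. g z * indicator (line_reflection p q -` A \<inter> space ?L2) z \<partial>?L2)"
      by (rule emeasure_density) measurable
    also have "\<dots> = (\<integral>\<^sup>+z. (\<lambda>w. g w * indicator A w) (line_reflection p q z) \<partial>?L2)"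
      by (intro nn_integral_cong) (simp add: g_reflection indicator_def space_pair_measure)
    also have "\<dots> = emeasure (density ?L2 g) A"
      using A by (subst nn_integral_lborel_pair_line_reflection[OF _ p pq]) (simp_all add: emeasure_density)
    finally show "emeasure (distr (density ?L2 g) ?L2 (line_reflection p q)) A = emeasure (density ?L2 g) A" .
  qed simp
qed

lemma (in prob_space) distr_indep_var_compose_pair:
  assumes YZ: "indep_var MY Y MZ Z" and f [measurable]: "f \<in> measurable MY S"
  shows "distr M (S \<Otimes>\<^sub>M MZ) (\<lambda>\<omega>. (f (Y \<omega>), Z \<omega>)) = distr M S (\<lambda>\<omega>. f (Y \<omega>)) \<Otimes>\<^sub>M distr M MZ Z"
proof -
  have [measurable]: "Y \<in> measurable M MY" "Z \<in> measurable M MZ"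
    using YZ by (auto dest: indep_var_rv1 indep_var_rv2)
  have "sigma_finite_measure (distr (distr M MZ Z) MZ (\<lambda>z. z))"
    by (intro prob_space_imp_sigma_finite prob_space.prob_space_distr prob_space_distr) simp_all
  then have "distr (distr M MY Y) S f \<Otimes>\<^sub>M distr (distr M MZ Z) MZ (\<lambda>z. z)
      = distr (distr M MY Y \<Otimes>\<^sub>M distr M MZ Z) (S \<Otimes>\<^sub>M MZ) (\<lambda>(y, z). (f y, z))"
    by (intro pair_measure_distr) simp_all
  also have "distr M MY Y \<Otimes>\<^sub>M distr M MZ Z = distr M (MY \<Otimes>\<^sub>M MZ) (\<lambda>\<omega>. (Y \<omega>, Z \<omega>))"
    using YZ indep_var_distribution_eq by blast
  finally show ?thesis
    by (simp add: distr_distr comp_def)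
qed

text \<open>The Gaussian pair enters as \<open>f \<circ> Y\<close> because \<open>indep_var\<close> requires both of its
variables to have the same type.\<close>
lemma (in prob_space) prob_le_two_mult_prob_halfplane:
  fixes Y Z :: "'a \<Rightarrow> 'b" and f :: "'b \<Rightarrow> real \<times> real"
  assumes YZ: "indep_var MY Y MZ Z"
    and f [measurable]: "f \<in> measurable MY (lborel \<Otimes>\<^sub>M lborel)"
    and std_normal_pair: "distr M (lborel \<Otimes>\<^sub>M lborel) (\<lambda>\<omega>. f (Y \<omega>)) = std_normal \<Otimes>\<^sub>M std_normal"
    and p: "p \<noteq> 0" and pq: "p\<^sup>2 + q\<^sup>2 = 1"
    and G [measurable]: "G \<in> sets (lborel \<Otimes>\<^sub>M MZ)"
  shows "prob {\<omega> \<in> space M. (p * fst (f (Y \<omega>)) + q * snd (f (Y \<omega>)), Z \<omega>) \<in> G}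
    \<le> 2 * prob {\<omega> \<in> space M. p * snd (f (Y \<omega>)) \<le> q * fst (f (Y \<omega>))
                                \<and> (p * fst (f (Y \<omega>)) + q * snd (f (Y \<omega>)), Z \<omega>) \<in> G}"
proof -
  let ?S = "(lborel \<Otimes>\<^sub>M lborel) \<Otimes>\<^sub>M MZ"
  have [measurable]: "Y \<in> measurable M MY" and Z [measurable]: "Z \<in> measurable M MZ"
    using YZ by (auto dest: indep_var_rv1 indep_var_rv2)
  have "distr M (lborel \<Otimes>\<^sub>M lborel) (\<lambda>\<omega>. line_reflection p q (f (Y \<omega>)))
      = distr M (lborel \<Otimes>\<^sub>M lborel) (\<lambda>\<omega>. f (Y \<omega>))"
    using distr_distr[of "line_reflection p q" "lborel \<Otimes>\<^sub>M lborel" "lborel \<Otimes>\<^sub>M lborel" "\<lambda>\<omega>. f (Y \<omega>)" M]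
    by (simp add: comp_def std_normal_pair distr_std_normal_pair_line_reflection[OF p pq])
  then have reflection_invariant:
    "distr M ?S (\<lambda>\<omega>. (line_reflection p q (f (Y \<omega>)), Z \<omega>)) = distr M ?S (\<lambda>\<omega>. (f (Y \<omega>), Z \<omega>))"
    using distr_indep_var_compose_pair[OF YZ, of "\<lambda>y. line_reflection p q (f y)" "lborel \<Otimes>\<^sub>M lborel"]
      distr_indep_var_compose_pair[OF YZ f] by simp
  define H where "H c = {u \<in> space ?S. 0 \<le> c * (q * fst (fst u) - p * snd (fst u))
                                      \<and> (p * fst (fst u) + q * snd (fst u), snd u) \<in> G}" for c :: real
  have H_sets [measurable]: "H c \<in> sets ?S" for c
    unfolding H_def by measurable
  have prob_H: "prob {\<omega> \<in> space M. (g (Y \<omega>), Z \<omega>) \<in> H c} = measure (distr M ?S (\<lambda>\<omega>. (g (Y \<omega>), Z \<omega>))) (H c)"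
    if [measurable]: "g \<in> measurable MY (lborel \<Otimes>\<^sub>M lborel)" for g c
    by (subst measure_distr[OF _ H_sets]) (auto intro!: arg_cong[where f = prob])
  define E where "E c = {\<omega> \<in> space M. (f (Y \<omega>), Z \<omega>) \<in> H c}" for c :: real
  have E_events: "E c \<in> events" for c
    unfolding E_def by measurable
  have "(f (Y \<omega>), Z \<omega>) \<in> H (-1) \<longleftrightarrow> (line_reflection p q (f (Y \<omega>)), Z \<omega>) \<in> H 1" for \<omega>
    using line_reflection_coordinates[OF pq, of "f (Y \<omega>)"] by (simp add: H_def space_pair_measure) argo
  then have "prob (E (-1)) = prob {\<omega> \<in> space M. (line_reflection p q (f (Y \<omega>)), Z \<omega>) \<in> H 1}"
    unfolding E_def by simp
  also have "\<dots> = prob (E 1)"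
    using prob_H[of "\<lambda>y. line_reflection p q (f y)" 1] prob_H[OF f, of 1]
    unfolding E_def reflection_invariant by simp
  finally have halves_equal: "prob (E (-1)) = prob (E 1)" .
  have "prob {\<omega> \<in> space M. (p * fst (f (Y \<omega>)) + q * snd (f (Y \<omega>)), Z \<omega>) \<in> G} \<le> prob (E 1 \<union> E (-1))"
    using measurable_space[OF Z]
    by (intro finite_measure_mono[OF _ sets.Un[OF E_events E_events]]) (auto simp: E_def H_def space_pair_measure)
  also have "\<dots> \<le> 2 * prob (E 1)"
    using measure_Un_le[of "E 1" M "E (-1)"] by (simp add: halves_equal E_events)
  also have "E 1 = {\<omega> \<in> space M. p * snd (f (Y \<omega>)) \<le> q * fst (f (Y \<omega>))
                                 \<and> (p * fst (f (Y \<omega>)) + q * snd (f (Y \<omega>)), Z \<omega>) \<in> G}"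
    using measurable_space[OF Z] by (auto simp: E_def H_def space_pair_measure)
  finally show ?thesis .
qed

lemma (in prob_space) std_normal_normalized_weighted_sum:
  fixes X :: "'i \<Rightarrow> 'a \<Rightarrow> real"
  assumes "finite I" and indep: "indep_vars (\<lambda>_. borel) X I"
    and std_normal_X: "\<And>i. i \<in> I \<Longrightarrow> distributed M lborel (X i) std_normal_density"
    and "\<exists>i\<in>I. c i \<noteq> 0"
  shows "distributed M lborel (\<lambda>\<omega>. (\<Sum>i\<in>I. c i * X i \<omega>) / sqrt (\<Sum>i\<in>I. (c i)\<^sup>2)) std_normal_density"
proof -
  define J where "J = {i \<in> I. c i \<noteq> 0}"
  have J: "finite J" "J \<noteq> {}" "J \<subseteq> I"
    using assms unfolding J_def by auto
  have sum_J: "(\<Sum>i\<in>I. c i * X i \<omega>) = (\<Sum>i\<in>J. c i * X i \<omega>)" "(\<Sum>i\<in>I. (c i)\<^sup>2) = (\<Sum>i\<in>J. (c i)\<^sup>2)" for \<omega>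
    by (rule sum.mono_neutral_right, fact, fact, simp add: J_def)+
  have "indep_vars (\<lambda>_. borel) (\<lambda>i \<omega>. c i * X i \<omega>) J"
    using indep_vars_subset[OF indep J(3)] by (rule indep_vars_compose2) simp
  moreover have "distributed M lborel (\<lambda>\<omega>. c i * X i \<omega>) (normal_density 0 \<bar>c i\<bar>)" if "i \<in> J" for i
    using normal_density_affine[OF std_normal_X[of i], of "c i" 0] that J(3) by (auto simp: J_def)
  ultimately have "distributed M lborel (\<lambda>\<omega>. \<Sum>i\<in>J. c i * X i \<omega>)
      (normal_density (\<Sum>i\<in>J. 0) (sqrt (\<Sum>i\<in>J. \<bar>c i\<bar>\<^sup>2)))"
    by (intro sum_indep_normal[OF J(1,2)]) (auto simp: J_def)
  then have "distributed M lborel (\<lambda>\<omega>. \<Sum>i\<in>J. c i * X i \<omega>) (normal_density 0 (sqrt (\<Sum>i\<in>J. (c i)\<^sup>2)))"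
    by simp
  moreover have "0 < sqrt (\<Sum>i\<in>J. (c i)\<^sup>2)"
    using J by (intro real_sqrt_gt_zero sum_pos) (auto simp: J_def)
  ultimately show ?thesis
    unfolding sum_J
    using normal_standard_normal_convert[of "sqrt (\<Sum>i\<in>J. (c i)\<^sup>2)" "\<lambda>\<omega>. \<Sum>i\<in>J. c i * X i \<omega>" 0]
    by simp
qed

lemma mult_projection_le:
  fixes p q w v :: real
  assumes "0 \<le> q" and "p\<^sup>2 + q\<^sup>2 = 1" and "p * v \<le> q * w"
  shows "p * (p * w + q * v) \<le> w"
proof -
  have "p * (p * w + q * v) = p\<^sup>2 * w + q * (p * v)"
    by (simp add: algebra_simps power2_eq_square)
  also have "\<dots> \<le> p\<^sup>2 * w + q * (q * w)"
    using assms by (intro add_left_mono mult_left_mono) auto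
  also have "\<dots> = (p\<^sup>2 + q\<^sup>2) * w"
    by (simp add: algebra_simps power2_eq_square)
  finally show ?thesis
    using assms(2) by simp
qed

lemma sqrt_gamma_acc_mult_v_noise:
  assumes "0 < gamma_acc \<gamma> m" and "0 < gamma_acc \<gamma> l" and "m \<le> l"
  shows "sqrt (gamma_acc \<gamma> l) * v_noise \<gamma> X l \<omega>
       = sqrt (gamma_acc \<gamma> m) * v_noise \<gamma> X m \<omega> + (\<Sum>i\<in>{m<..l}. sqrt (\<gamma> i) * X i \<omega>)"
proof -
  have "{1..l} = {1..m} \<union> {m<..l}"
    using assms(3) by auto
  then have "(\<Sum>i=1..l. sqrt (\<gamma> i) * X i \<omega>) = (\<Sum>i=1..m. sqrt (\<gamma> i) * X i \<omega>) + (\<Sum>i\<in>{m<..l}. sqrt (\<gamma> i) * X i \<omega>)"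
    by (simp only:) (rule sum.union_disjoint; auto)
  moreover have sum_eq: "sqrt (gamma_acc \<gamma> n) * v_noise \<gamma> X n \<omega> = (\<Sum>i=1..n. sqrt (\<gamma> i) * X i \<omega>)"
    if "0 < gamma_acc \<gamma> n" for n
    using that by (simp add: v_noise_def)
  ultimately show ?thesis
    using sum_eq[OF assms(1)] sum_eq[OF assms(2)] by linarith
qed

definition error_event :: "'a measure \<Rightarrow> (nat \<Rightarrow> real) \<Rightarrow> (nat \<Rightarrow> 'a \<Rightarrow> real) \<Rightarrow> real \<Rightarrow> nat set \<Rightarrow> 'a set" where
  "error_event M \<gamma> X d L = {\<omega> \<in> space M. \<forall>l\<in>L. 1/2 * sqrt (gamma_acc \<gamma> l) * d < v_noise \<gamma> X l \<omega>}"

locale chase_combining = prob_space M for M :: "'a measure" +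
  fixes X :: "nat \<Rightarrow> 'a \<Rightarrow> real" and \<gamma> :: "nat \<Rightarrow> real" and k :: nat
  assumes indep: "indep_vars (\<lambda>_. borel) X {1..k}"
    and std_normal_X: "\<And>i. i \<in> {1..k} \<Longrightarrow> distributed M lborel (X i) std_normal_density"
    and gamma_1_pos: "0 < \<gamma> 1"
    and gamma_nonneg: "\<And>i. i \<in> {2..k} \<Longrightarrow> 0 \<le> \<gamma> i"
begin

lemma gamma_nonneg_rounds: "i \<in> {1..k} \<Longrightarrow> 0 \<le> \<gamma> i"
  using gamma_1_pos gamma_nonneg[of i] by (cases "i = 1") auto

lemma gamma_acc_pos:
  assumes "1 \<le> l" and "l \<le> k"
  shows "0 < gamma_acc \<gamma> l"
proof -
  have "\<gamma> 1 \<le> gamma_acc \<gamma> l"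
    unfolding gamma_acc_def using assms gamma_nonneg_rounds
    by (intro member_le_sum) auto
  then show ?thesis
    using gamma_1_pos by simp
qed

lemma v_noise_std_normal:
  assumes "1 \<le> l" and "l \<le> k"
  shows "distributed M lborel (v_noise \<gamma> X l) std_normal_density"
proof -
  have "(\<Sum>i=1..l. (sqrt (\<gamma> i))\<^sup>2) = gamma_acc \<gamma> l"
    unfolding gamma_acc_def using assms gamma_nonneg_rounds by (intro sum.cong) auto
  moreover have "distributed M lborel (\<lambda>\<omega>. (\<Sum>i=1..l. sqrt (\<gamma> i) * X i \<omega>) / sqrt (\<Sum>i=1..l. (sqrt (\<gamma> i))\<^sup>2))
      std_normal_density"
    using assms gamma_1_pos
    by (intro std_normal_normalized_weighted_sum indep_vars_subset[OF indep] std_normal_X)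
       (auto intro!: bexI[of _ 1])
  ultimately show ?thesis
    by (simp add: v_noise_def[abs_def])
qed

lemma error_event_in_events:
  assumes "L \<subseteq> {1..k}"
  shows "error_event M \<gamma> X d L \<in> events"
  unfolding error_event_def
proof (rule sets.sets_Collect_finite_All)
  fix l assume "l \<in> L"
  then have [measurable]: "v_noise \<gamma> X l \<in> borel_measurable M"
    using assms by (intro distributed_measurable[OF v_noise_std_normal, simplified]) auto
  show "{\<omega> \<in> space M. 1/2 * sqrt (gamma_acc \<gamma> l) * d < v_noise \<gamma> X l \<omega>} \<in> events"
    by measurable
qed (use assms finite_subset in auto)

lemma distr_v_noise_X_Suc:
  assumes "1 \<le> j" and "j < k"
  shows "distr M (lborel \<Otimes>\<^sub>M lborel) (\<lambda>\<omega>. (v_noise \<gamma> X j \<omega>, X (Suc j) \<omega>)) = std_normal \<Otimes>\<^sub>M std_normal"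
proof -
  have "indep_var (PiM {1..j} (\<lambda>_. borel)) (\<lambda>\<omega>. restrict (\<lambda>i. X i \<omega>) {1..j})
                  (PiM {Suc j} (\<lambda>_. borel)) (\<lambda>\<omega>. restrict (\<lambda>i. X i \<omega>) {Suc j})"
    using assms by (intro indep_var_restrict[OF indep]) auto
  then have "indep_var lborel ((\<lambda>y. v_noise \<gamma> (\<lambda>i y. y i) j y) \<circ> (\<lambda>\<omega>. restrict (\<lambda>i. X i \<omega>) {1..j}))
                       lborel ((\<lambda>y. y (Suc j)) \<circ> (\<lambda>\<omega>. restrict (\<lambda>i. X i \<omega>) {Suc j}))"
    by (rule indep_var_compose) (auto simp: v_noise_def)
  moreover have "(\<lambda>y. v_noise \<gamma> (\<lambda>i y. y i) j y) \<circ> (\<lambda>\<omega>. restrict (\<lambda>i. X i \<omega>) {1..j}) = v_noise \<gamma> X j"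
    by (auto simp: v_noise_def fun_eq_iff intro!: sum.cong)
  ultimately have "indep_var lborel (v_noise \<gamma> X j) lborel (X (Suc j))"
    by (simp add: comp_def)
  then show ?thesis
    using assms v_noise_std_normal[of j] std_normal_X[of "Suc j"]
    by (simp add: indep_var_distribution_eq distributed_def)
qed

lemma v_noise_Suc:
  assumes "1 \<le> j" and "j < k"
  shows "v_noise \<gamma> X (Suc j) \<omega>
       = sqrt (gamma_acc \<gamma> j / gamma_acc \<gamma> (Suc j)) * v_noise \<gamma> X j \<omega>
         + sqrt (\<gamma> (Suc j) / gamma_acc \<gamma> (Suc j)) * X (Suc j) \<omega>"
proof -
  have "{j<..Suc j} = {Suc j}"
    by auto
  then show ?thesis
    using sqrt_gamma_acc_mult_v_noise[of \<gamma> j "Suc j" X \<omega>] gamma_acc_pos[of j] gamma_acc_pos[of "Suc j"] assms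
    by (simp add: real_sqrt_divide field_simps)
qed

lemma error_event_Suc_eq_preimage:
  assumes "1 \<le> j" and "j < k"
  obtains H where "H \<in> sets (lborel \<Otimes>\<^sub>M PiM {Suc (Suc j)..k} (\<lambda>_. borel))"
    and "error_event M \<gamma> X d {Suc j..k}
       = {\<omega> \<in> space M. (v_noise \<gamma> X (Suc j) \<omega>, restrict (\<lambda>i. X i \<omega>) {Suc (Suc j)..k}) \<in> H}"
proof -
  define G where "G = gamma_acc \<gamma>"
  define MZ where "MZ = PiM {Suc (Suc j)..k} (\<lambda>_. borel :: real measure)"
  define V where "V = v_noise \<gamma> X (Suc j)"
  define T where "T l z = (\<Sum>i\<in>{Suc j<..l}. sqrt (\<gamma> i) * z i)" for l and z :: "nat \<Rightarrow> real"
  define H where "H = {u \<in> space (lborel \<Otimes>\<^sub>M MZ). \<forall>l\<in>{Suc j..k}.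
    1/2 * sqrt (G l) * d < (sqrt (G (Suc j)) * fst u + T l (snd u)) / sqrt (G l)}"
  have "H \<in> sets (lborel \<Otimes>\<^sub>M MZ)"
    unfolding H_def
  proof (rule sets.sets_Collect_finite_All)
    fix l assume l: "l \<in> {Suc j..k}"
    have [measurable]: "T l \<in> borel_measurable MZ"
      unfolding T_def MZ_def by measurable (use l in auto)
    show "{u \<in> space (lborel \<Otimes>\<^sub>M MZ). 1/2 * sqrt (G l) * d < (sqrt (G (Suc j)) * fst u + T l (snd u)) / sqrt (G l)}
        \<in> sets (lborel \<Otimes>\<^sub>M MZ)"
      by measurable
  qed simp
  moreover have v_tail: "v_noise \<gamma> X l \<omega>
      = (sqrt (G (Suc j)) * V \<omega> + T l (restrict (\<lambda>i. X i \<omega>) {Suc (Suc j)..k})) / sqrt (G l)"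
    if "l \<in> {Suc j..k}" for l \<omega>
    using sqrt_gamma_acc_mult_v_noise[of \<gamma> "Suc j" l X \<omega>] gamma_acc_pos[of "Suc j"] gamma_acc_pos[of l] that assms
    by (simp add: V_def T_def G_def field_simps)
  then have "error_event M \<gamma> X d {Suc j..k}
      = {\<omega> \<in> space M. (V \<omega>, restrict (\<lambda>i. X i \<omega>) {Suc (Suc j)..k}) \<in> H}"
    unfolding error_event_def H_def G_def MZ_def by (auto simp: space_pair_measure space_PiM)
  ultimately show ?thesis
    using that unfolding MZ_def V_def by blast
qed

lemma prob_error_event_le_two_mult:
  assumes j: "1 \<le> j" "j < k"
  shows "prob (error_event M \<gamma> X d {Suc j..k}) \<le> 2 * prob (error_event M \<gamma> X d {j..k})"
proof -
  define G where "G = gamma_acc \<gamma>"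
  define p where "p = sqrt (G j / G (Suc j))"
  define q where "q = sqrt (\<gamma> (Suc j) / G (Suc j))"
  have G_j: "0 < G j" "0 < G (Suc j)" and \<gamma>_Suc: "0 \<le> \<gamma> (Suc j)"
    unfolding G_def using j gamma_acc_pos gamma_nonneg_rounds by simp_all
  have p: "0 < p" and q: "0 \<le> q" and pq: "p\<^sup>2 + q\<^sup>2 = 1"
    unfolding p_def q_def using G_j \<gamma>_Suc
    by (simp_all add: add_divide_distrib[symmetric] G_def gamma_acc_def)
  have v_Suc: "v_noise \<gamma> X (Suc j) \<omega> = p * v_noise \<gamma> X j \<omega> + q * X (Suc j) \<omega>" for \<omega>
    unfolding p_def q_def G_def using v_noise_Suc[OF j] .
  define f where "f y = (v_noise \<gamma> (\<lambda>i y. y i) j y, y (Suc j))" for y :: "nat \<Rightarrow> real"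
  define Y where "Y \<omega> = restrict (\<lambda>i. X i \<omega>) {1..Suc j}" for \<omega>
  define Z where "Z \<omega> = restrict (\<lambda>i. X i \<omega>) {Suc (Suc j)..k}" for \<omega>
  have f_Y: "f (Y \<omega>) = (v_noise \<gamma> X j \<omega>, X (Suc j) \<omega>)" for \<omega>
    unfolding f_def Y_def v_noise_def by (auto intro!: sum.cong)
  have f: "f \<in> measurable (PiM {1..Suc j} (\<lambda>_. borel)) (lborel \<Otimes>\<^sub>M lborel)"
    unfolding f_def v_noise_def by measurable
  have YZ: "indep_var (PiM {1..Suc j} (\<lambda>_. borel)) Y (PiM {Suc (Suc j)..k} (\<lambda>_. borel)) Z"
    unfolding Y_def Z_def using j by (intro indep_var_restrict[OF indep]) auto
  obtain H where H: "H \<in> sets (lborel \<Otimes>\<^sub>M PiM {Suc (Suc j)..k} (\<lambda>_. borel))"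
    and tail_event: "error_event M \<gamma> X d {Suc j..k} = {\<omega> \<in> space M. (v_noise \<gamma> X (Suc j) \<omega>, Z \<omega>) \<in> H}"
    using error_event_Suc_eq_preimage[OF j] unfolding Z_def by blast
  let ?halfplane = "{\<omega> \<in> space M. p * X (Suc j) \<omega> \<le> q * v_noise \<gamma> X j \<omega> \<and> (v_noise \<gamma> X (Suc j) \<omega>, Z \<omega>) \<in> H}"
  have "prob (error_event M \<gamma> X d {Suc j..k}) \<le> 2 * prob ?halfplane"
    using prob_le_two_mult_prob_halfplane[OF YZ f _ _ pq H] distr_v_noise_X_Suc[OF j] p
    unfolding tail_event by (simp add: f_Y v_Suc)
  also have "?halfplane \<subseteq> error_event M \<gamma> X d {j..k}"
  proof
    fix \<omega> assume \<omega>: "\<omega> \<in> ?halfplane"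
    then have later: "\<omega> \<in> error_event M \<gamma> X d {Suc j..k}"
      unfolding tail_event by blast
    have "1/2 * sqrt (G j) * d = p * (1/2 * sqrt (G (Suc j)) * d)"
      using G_j by (simp add: p_def real_sqrt_divide)
    also have "\<dots> < p * v_noise \<gamma> X (Suc j) \<omega>"
      using later j p unfolding error_event_def G_def by auto
    also have "\<dots> \<le> v_noise \<gamma> X j \<omega>"
      using mult_projection_le[OF q pq] \<omega> by (simp add: v_Suc)
    finally have "1/2 * sqrt (gamma_acc \<gamma> j) * d < v_noise \<gamma> X j \<omega>"
      unfolding G_def .
    moreover have "{j..k} = insert j {Suc j..k}"
      using j by auto
    ultimately show "\<omega> \<in> error_event M \<gamma> X d {j..k}"
      using later unfolding error_event_def by auto
  qed
  then have "prob ?halfplane \<le> prob (error_event M \<gamma> X d {j..k})"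
    using j by (intro finite_measure_mono error_event_in_events) auto
  finally show ?thesis
    by simp
qed

lemma prob_error_event_last_le:
  assumes "1 \<le> j" and "j \<le> k"
  shows "prob (error_event M \<gamma> X d {k}) \<le> 2 ^ (k - j) * prob (error_event M \<gamma> X d {j..k})"
  using assms(2)
proof (induction j rule: inc_induct)
  case base
  then show ?case by simp
next
  case (step n)
  have "prob (error_event M \<gamma> X d {k}) \<le> 2 ^ (k - Suc n) * prob (error_event M \<gamma> X d {Suc n..k})"
    by (fact step.IH)
  also have "\<dots> \<le> 2 ^ (k - Suc n) * (2 * prob (error_event M \<gamma> X d {n..k}))"
    using assms(1) step.hyps by (intro mult_left_mono prob_error_event_le_two_mult) auto
  also have "\<dots> = 2 ^ (k - n) * prob (error_event M \<gamma> X d {n..k})"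
    using step.hyps by (simp add: Suc_diff_Suc[symmetric] power_Suc2[symmetric] mult.assoc)
  finally show ?case .
qed

end

theorem proposition2:
  fixes M :: "'a measure" and X :: "nat \<Rightarrow> 'a \<Rightarrow> real"
    and \<gamma> :: "nat \<Rightarrow> real" and k :: nat and d :: real
  assumes "prob_space M"
    and "prob_space.indep_vars M (\<lambda>_. borel) X {1..k}"
    and "\<And>i. i \<in> {1..k} \<Longrightarrow> distributed M lborel (X i) std_normal_density"
    and "k \<ge> 1" and "d > 0"
    and "\<gamma> 1 > 0" and "\<And>i. i \<in> {2..k} \<Longrightarrow> \<gamma> i \<ge> 0"
  shows "1 / 2 ^ (k - 1) * P_k M \<gamma> X k d \<le> P_1k M \<gamma> X k d
         \<and> P_1k M \<gamma> X k d \<le> P_k M \<gamma> X k d"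
proof -
  interpret prob_space M
    by fact
  interpret chase_combining M X \<gamma> k
    by unfold_locales (rule assms; assumption)+
  have P_1k: "P_1k M \<gamma> X k d = prob (error_event M \<gamma> X d {1..k})"
    unfolding P_1k_def error_event_def ..
  have P_k: "P_k M \<gamma> X k d = prob (error_event M \<gamma> X d {k})"
    unfolding P_k_def error_event_def by simp
  have "P_k M \<gamma> X k d \<le> 2 ^ (k - 1) * P_1k M \<gamma> X k d"
    unfolding P_1k P_k using prob_error_event_last_le[of 1] \<open>k \<ge> 1\<close> by simp
  moreover have "P_1k M \<gamma> X k d \<le> P_k M \<gamma> X k d"
    unfolding P_1k P_k using \<open>k \<ge> 1\<close>
    by (intro finite_measure_mono error_event_in_events) (auto simp: error_event_def)
  ultimately show ?thesis
    by (simp add: field_simps)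
qed

end
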